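(* Assume the setting of the context, with $\|\widehat B^{k,1}\|_F\le B$ and $\widehat\ell_1=\ell_1(1+B)^2$. Fix $\widehat x^k$, $\delta_k\in(0,\delta_{\max}]$ and constants $\kappa_{dcp},\kappa_{ef},\kappa_{ed}>0$. Let $y^{i,*}:\mathcal{B}(\widehat x^k,\delta_k)\to\mathcal{Y}$ satisfy $$\|y^{i,*}(x)-y^{k,*}(x)\|\le\min\Big\{\frac{\kappa_{ed}\delta_k}{\widehat\ell_1},\ \frac{\kappa_{ef}\delta_k^2}{L_1}\Big\}\quad\forall x\in\mathcal{B}(\widehat x^k,\delta_k),$$ let $g_k=\nabla_x\mathcal{L}^k(\widehat x^k,y^{i,*}(\widehat x^k))$, and let $s^k$ with $\|s^k\|\le\delta_k$ satisfy $\mathcal{L}^k(\widehat x^k,y^{i,*}(\widehat x^k))-\mathcal{L}^k(\widehat x^k+s^k,y^{i,*}(\widehat x^k+s^k))\ge\kappa_{dcp}\|g_k\|\min\{\delta_k,1\}$. Assume $|\Phi(x)-\Phi^k(x)|\le\kappa_{ef}\delta_k^2$ for all $x\in\mathcal{B}(\widehat x^k,\delta_k)$ and $\|\nabla\Phi(\widehat x^k)\|-\|\nabla\Phi^k(\widehat x^k)\|\le\kappa_{ed}\delta_k$. If $$\delta_k\le\frac{\|\nabla\Phi(\widehat x^k)\|}{\big(\frac{8\kappa_{ef}}{\kappa_{dcp}}+2\kappa_{ed}\big)\max\{1,\delta_{\max}\}},$$ then $$\Phi(\widehat x^k+s^k)-\Phi(\widehat x^k)\le-C_1\|\nabla\Phi(\widehat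 x^k)\|\delta_k,\qquad C_1=\frac{4\kappa_{dcp}\kappa_{ef}}{(8\kappa_{ef}+2\kappa_{ed}\kappa_{dcp})\max\{\delta_{\max},1\}}.$$
   Context: Standing assumptions: $l:\mathbb{R}^n\times\mathbb{R}^m\times\mathbb{R}^d\to\mathbb{R}$ is $\ell_1$-smooth and $L_1$-Lipschitz; $\psi:\mathbb{R}^n\to\mathbb{R}^d$ is twice differentiable, $\ell_0$-smooth and $L_0$-Lipschitz; $\mathcal{Y}\subset\mathbb{R}^m$ is nonempty, closed, convex, bounded; $l(x,\cdot,z)$ is $\mu$-strongly concave on $\mathcal{Y}$; $\tilde\epsilon$ is a random vector in $\mathbb{R}^d$ with compact support and zero mean. $\mathcal{L}(x,y)=\mathbb{E}_{\tilde\epsilon}[l(x,y,\psi(x)+\tilde\epsilon)]$, $\Phi(x)=\max_{y\in\mathcal{Y}}\mathcal{L}(x,y)$ (differentiable). $\mathcal{B}(x,\delta)=\{z:\|z-x\|\le\delta\}$. Local model at iteration $k$: data $x^i\in\mathcal{B}(\widehat x^k,\delta_k)$, $\omega^i=\psi(x^i)+\epsilon^i$ ($i=1,\dots,N_k$), least-squares affine coefficients $\widehat B^{k,1},\widehat B^{k,0}$, residuals $e^{k,i}=\omega^i-(\widehat B^{k,1})^\top x^i-(\widehat B^{k,0})^\top$, $m_k(x,e)=(\widehat B^{k,1})^\top x+(\widehat B^{k,0})^\top+e$, $\mathcal{L}^k(x,y)=\frac1{N_k}\sum_i l(x,y,m_k(x,e^{k,i}))$, $\Phi^k(x)=\max_{y\in\mathcal{Y}}\mathcal{L}^k(x,y)$,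 $y^{k,*}(x)=\arg\max_{y\in\mathcal{Y}}\mathcal{L}^k(x,y)$. (In the paper the two accuracy conditions on $\Phi-\Phi^k$ form an event holding with probability at least $\alpha$ for large enough samples.) *)

theory Defs
  imports "HOL-Probability.Probability"
begin

definition smooth_fun :: "real \<Rightarrow> ('a::euclidean_space \<Rightarrow> 'b::real_normed_vector) \<Rightarrow> bool" where
  "smooth_fun C f \<longleftrightarrow> (\<exists>D. (\<forall>z. (f has_derivative blinfun_apply (D z)) (at z)) \<and> C-lipschitz_on UNIV D)"

definition twice_diff :: "('a::euclidean_space \<Rightarrow> 'b::real_normed_vector) \<Rightarrow> bool" where
  "twice_diff f \<longleftrightarrow> (\<exists>D. (\<forall>z. (f has_derivative blinfun_apply (D z)) (at z)) \<and> (\<forall>z. D differentiable (at z)))"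

text \<open>Gradient of a real-valued function (meaningful where it is differentiable).\<close>
definition grad :: "('a::real_inner \<Rightarrow> real) \<Rightarrow> 'a \<Rightarrow> 'a" where
  "grad f x = (THE g. (f has_derivative (\<lambda>h. g \<bullet> h)) (at x))"

definition strongly_concave_on :: "real \<Rightarrow> 'a::real_normed_vector set \<Rightarrow> ('a \<Rightarrow> real) \<Rightarrow> bool" where
  "strongly_concave_on \<mu> S f \<longleftrightarrow> (\<forall>u\<in>S. \<forall>v\<in>S. \<forall>t\<in>{0..1}.
     f (t *\<^sub>R u + (1 - t) *\<^sub>R v) \<ge> t * f u + (1 - t) * f v + \<mu> / 2 * t * (1 - t) * (norm (u - v))\<^sup>2)"

definition Lexp :: "('n \<Rightarrow> 'm \<Rightarrow> 'd::euclidean_space \<Rightarrow> real) \<Rightarrow> ('n \<Rightarrow> 'd) \<Rightarrow> 'd measure \<Rightarrow> 'n \<Rightarrow> 'm \<Rightarrow> real" where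
  "Lexp l \<psi> E x y = (\<integral>e. l x y (\<psi> x + e) \<partial>E)"

definition Phi_of :: "('n \<Rightarrow> 'm \<Rightarrow> real) \<Rightarrow> 'm set \<Rightarrow> 'n \<Rightarrow> real" where
  "Phi_of L Y x = (SUP y\<in>Y. L x y)"

text \<open>Local affine model m_k(x,e) = (B1)^T x + (B0)^T + e, with B1 an n x d matrix.\<close>
definition model :: "real^'d^'n \<Rightarrow> real^'d \<Rightarrow> real^'n \<Rightarrow> real^'d \<Rightarrow> real^'d" where
  "model B1 B0 x e = x v* B1 + B0 + e"

definition ls_obj :: "nat \<Rightarrow> (nat \<Rightarrow> real^'n) \<Rightarrow> (nat \<Rightarrow> real^'d) \<Rightarrow> real^'d^'n \<Rightarrow> real^'d \<Rightarrow> real" where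
  "ls_obj N xs ws B1 B0 = (\<Sum>i<N. (norm (ws i - xs i v* B1 - B0))\<^sup>2)"

definition Lk :: "(real^'n \<Rightarrow> 'm \<Rightarrow> real^'d \<Rightarrow> real) \<Rightarrow> nat \<Rightarrow> real^'d^'n \<Rightarrow> real^'d \<Rightarrow> (nat \<Rightarrow> real^'d) \<Rightarrow> real^'n \<Rightarrow> 'm \<Rightarrow> real" where
  "Lk l N B1 B0 es x y = (1 / real N) * (\<Sum>i<N. l x y (model B1 B0 x (es i)))"

definition argmax_on :: "('m \<Rightarrow> real) \<Rightarrow> 'm set \<Rightarrow> 'm" where
  "argmax_on f Y = (THE y. y \<in> Y \<and> (\<forall>y'\<in>Y. f y' \<le> f y))"

end

theory Submission
  imports Defs
begin

text \<open>
  For fixed x the surrogate L^k(x, .) is strongly concave on the compact convex set Y, so it has a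
  unique maximiser y^{k,*}(x) away from which it drops quadratically. Danskin's argument then shows
  that Phi^k is differentiable with gradient nabla_x L^k(x, y^{k,*}(x)). Since nabla_x L^k is
  ell1 (1 + |B1|)-Lipschitz in y, with ell1 (1 + |B1|) <= ellhat, and L^k is L1-Lipschitz in y,
  the closeness of y^i to y^{k,*} gives |nabla Phi^k| <= |g_k| + kappa_ed delta and costs at most
  kappa_ef delta^2 in function values. Chaining this with the decrease condition and the two
  accuracy conditions yields
  Phi(x + s) - Phi(x) <= 3 kappa_ef delta^2 - kappa_dcp (|nabla Phi| - 2 kappa_ed delta) min(delta, 1),
  and the upper bound on delta turns the right-hand side into -C1 |nabla Phi| delta.
\<close>

lemma norm_vector_matrix_mult_le:
  fixes h :: "real^'n" and A :: "real^'d^'n"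
  shows "norm (h v* A) \<le> norm h * norm A"
proof -
  have "h v* A = (\<Sum>i\<in>UNIV. h$i *\<^sub>R A$i)"
    by (simp add: vec_eq_iff vector_matrix_mult_def sum_component)
  then have "norm (h v* A) \<le> (\<Sum>i\<in>UNIV. norm (h$i *\<^sub>R A$i))"
    by (simp only: norm_sum)
  also have "\<dots> = (\<Sum>i\<in>UNIV. \<bar>h$i\<bar> * norm (A$i))"
    by simp
  also have "\<dots> = (\<chi> i. \<bar>h$i\<bar>) \<bullet> (\<chi> i. norm (A$i))"
    by (simp add: inner_vec_def)
  also have "\<dots> \<le> norm (\<chi> i. \<bar>h$i\<bar>) * norm (\<chi> i. norm (A$i))"
    by (rule norm_cauchy_schwarz)
  also have "\<dots> = norm h * norm A"
    by (simp add: norm_vec_def)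
  finally show ?thesis .
qed

lemma bounded_linear_vector_matrix_mult: "bounded_linear (\<lambda>h::real^'n. h v* (A::real^'d^'n))"
proof -
  have "(\<lambda>h::real^'n. h v* A) = (\<lambda>h. transpose A *v h)"
    by simp
  then show ?thesis
    using matrix_vector_mul_bounded_linear by metis
qed

lemma norm_triple_le:
  fixes a :: "'a::real_normed_vector" and b :: "'b::real_normed_vector" and c :: "'c::real_normed_vector"
  shows "norm (a, b, c) \<le> norm a + norm b + norm c"
  using norm_Pair_le[of a "(b, c)"] norm_Pair_le[of b c] by simp

lemma norm_mean_diff_le:
  fixes f g :: "nat \<Rightarrow> 'a::real_normed_vector"
  assumes "N > 0" and "\<And>i. i < N \<Longrightarrow> norm (f i - g i) \<le> K"
  shows "norm ((1 / real N) *\<^sub>R (\<Sum>i<N. f i) - (1 / real N) *\<^sub>R (\<Sum>i<N. g i)) \<le> K"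
proof -
  have "norm ((1 / real N) *\<^sub>R (\<Sum>i<N. f i) - (1 / real N) *\<^sub>R (\<Sum>i<N. g i))
      = (1 / real N) * norm (\<Sum>i<N. f i - g i)"
    by (simp add: sum_subtractf flip: scaleR_diff_right)
  also have "\<dots> \<le> (1 / real N) * (\<Sum>i<N. K)"
    using assms(2) by (intro mult_left_mono order_trans[OF norm_sum sum_mono]) auto
  also have "\<dots> = K"
    using assms(1) by simp
  finally show ?thesis .
qed

section \<open>Strong concavity and maximisers\<close>

lemma strongly_concave_on_mean:
  assumes "\<And>i. strongly_concave_on \<mu> Y (g i)" and "N > 0"
  shows "strongly_concave_on \<mu> Y (\<lambda>y. (1 / real N) * (\<Sum>i<N. g i y))"
  unfolding strongly_concave_on_def
proof (intro ballI)
  fix u v t assume uvt: "u \<in> Y" "v \<in> Y" "t \<in> {0..(1::real)}"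
  let ?w = "t *\<^sub>R u + (1 - t) *\<^sub>R v" and ?q = "\<mu> / 2 * t * (1 - t) * (norm (u - v))\<^sup>2"
  have "(\<Sum>i<N. t * g i u + (1 - t) * g i v + ?q) \<le> (\<Sum>i<N. g i ?w)"
    using assms(1) uvt unfolding strongly_concave_on_def by (intro sum_mono) blast
  then have "t * (\<Sum>i<N. g i u) + (1 - t) * (\<Sum>i<N. g i v) + real N * ?q \<le> (\<Sum>i<N. g i ?w)"
    by (simp add: sum.distrib sum_distrib_left)
  then have "(1 / real N) * (t * (\<Sum>i<N. g i u) + (1 - t) * (\<Sum>i<N. g i v) + real N * ?q)
      \<le> (1 / real N) * (\<Sum>i<N. g i ?w)"
    by (rule mult_left_mono) simp
  then show "t * ((1 / real N) * (\<Sum>i<N. g i u)) + (1 - t) * ((1 / real N) * (\<Sum>i<N. g i v)) + ?q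
      \<le> (1 / real N) * (\<Sum>i<N. g i ?w)"
    using assms(2) by (simp add: field_simps)
qed

lemma strongly_concave_on_quadratic_growth:
  assumes sc: "strongly_concave_on \<mu> Y f" and "convex Y"
    and ys: "ys \<in> Y" "\<And>y. y \<in> Y \<Longrightarrow> f y \<le> f ys" and y: "y \<in> Y"
  shows "f y + \<mu> / 4 * (norm (y - ys))\<^sup>2 \<le> f ys"
proof -
  have mid: "(1/2) *\<^sub>R ys + (1 - 1/2) *\<^sub>R y \<in> Y"
    using \<open>convex Y\<close> ys(1) y by (rule convexD) auto
  have "1/2 * f ys + (1 - 1/2) * f y + \<mu> / 2 * (1/2) * (1 - 1/2) * (norm (ys - y))\<^sup>2
      \<le> f ((1/2) *\<^sub>R ys + (1 - 1/2) *\<^sub>R y)"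
  proof -
    have "1/2 \<in> {0..(1::real)}"
      by simp
    then show ?thesis
      using sc ys(1) y unfolding strongly_concave_on_def by blast
  qed
  also have "\<dots> \<le> f ys"
    using mid by (rule ys(2))
  finally show ?thesis
    by (simp add: norm_minus_commute)
qed

lemma argmax_on_strongly_concave:
  fixes f :: "'b::real_normed_vector \<Rightarrow> real"
  assumes sc: "strongly_concave_on \<mu> Y f" and "\<mu> > 0" and "convex Y" and "compact Y"
    and "Y \<noteq> {}" and "continuous_on Y f"
  shows "argmax_on f Y \<in> Y"
    and "\<And>y. y \<in> Y \<Longrightarrow> f y + \<mu> / 4 * (norm (y - argmax_on f Y))\<^sup>2 \<le> f (argmax_on f Y)"
proof -
  obtain ys where ys: "ys \<in> Y" "\<And>y. y \<in> Y \<Longrightarrow> f y \<le> f ys"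
    using continuous_attains_sup[OF \<open>compact Y\<close> \<open>Y \<noteq> {}\<close> \<open>continuous_on Y f\<close>] by blast
  note grow = strongly_concave_on_quadratic_growth[OF sc \<open>convex Y\<close> ys]
  have "argmax_on f Y = ys"
    unfolding argmax_on_def
  proof (rule the_equality)
    fix z assume z: "z \<in> Y \<and> (\<forall>y\<in>Y. f y \<le> f z)"
    then have "\<mu> / 4 * (norm (z - ys))\<^sup>2 \<le> 0"
      using grow[of z] ys(1) by auto
    then show "z = ys"
      using \<open>\<mu> > 0\<close> by (simp add: mult_le_0_iff)
  qed (use ys in auto)
  then show "argmax_on f Y \<in> Y" and "\<And>y. y \<in> Y \<Longrightarrow> f y + \<mu> / 4 * (norm (y - argmax_on f Y))\<^sup>2 \<le> f (argmax_on f Y)"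
    using ys(1) grow by auto
qed

lemma Phi_of_eqI:
  assumes "y \<in> Y" and "\<And>y'. y' \<in> Y \<Longrightarrow> L x y' \<le> L x y"
  shows "Phi_of L Y x = L x y"
  unfolding Phi_of_def using assms by (intro cSup_eq_maximum) auto

section \<open>Danskin's theorem\<close>

lemma has_derivative_at_remainderI:
  fixes f :: "'a::real_normed_vector \<Rightarrow> 'b::real_normed_vector"
  assumes "bounded_linear D" and bound: "\<And>h. norm (f (x + h) - f x - D h) \<le> r h * norm h"
    and "(r \<longlongrightarrow> 0) (at 0)"
  shows "(f has_derivative D) (at x)"
  unfolding has_derivative_at
proof
  show "(\<lambda>h. norm (f (x + h) - f x - D h) / norm h) \<midarrow>0\<rightarrow> 0"
  proof (rule Lim_null_comparison)
    show "\<forall>\<^sub>F h in at 0. norm (norm (f (x + h) - f x - D h) / norm h) \<le> r h"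
      unfolding eventually_at_filter
    proof (rule always_eventually, intro allI impI)
      fix h :: 'a
      assume "h \<noteq> 0"
      then show "norm (norm (f (x + h) - f x - D h) / norm h) \<le> r h"
        using bound[of h] by (simp add: pos_divide_le_eq)
    qed
  qed fact
qed fact

lemma linearization_error_le:
  fixes f :: "'a::real_normed_vector \<Rightarrow> 'b::real_normed_vector"
  assumes der: "\<And>x. (f has_derivative blinfun_apply (Df x)) (at x)"
    and lip: "\<And>x x'. norm (Df x - Df x') \<le> c * norm (x - x')" and "c \<ge> 0"
  shows "norm (f (x0 + h) - f x0 - Df x0 h) \<le> c * (norm h)\<^sup>2"
proof -
  have "norm (f (x0 + h) - f x0 - Df x0 ((x0 + h) - x0)) \<le> norm ((x0 + h) - x0) * (c * norm h)"
  proof (rule differentiable_bound_linearization[where S = "cball x0 (norm h)"])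
    show "x0 + t *\<^sub>R (x0 + h - x0) \<in> cball x0 (norm h)" if "t \<in> {0..1}" for t
      using that by (auto simp: dist_norm intro!: mult_left_le_one_le)
    show "(f has_derivative blinfun_apply (Df x)) (at x within cball x0 (norm h))" for x
      using der by (rule has_derivative_at_withinI)
    show "onorm (blinfun_apply (Df x) - blinfun_apply (Df x0)) \<le> c * norm h"
      if "x \<in> cball x0 (norm h)" for x
    proof -
      have "onorm (blinfun_apply (Df x) - blinfun_apply (Df x0)) = norm (Df x - Df x0)"
      proof -
        have "blinfun_apply (Df x - Df x0) = blinfun_apply (Df x) - blinfun_apply (Df x0)"
          by (rule ext) (simp add: blinfun.diff_left)
        then show ?thesis
          by (simp add: norm_blinfun.rep_eq)
      qed
      also have "\<dots> \<le> c * norm (x - x0)"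
        by (rule lip)
      also have "\<dots> \<le> c * norm h"
        using that \<open>c \<ge> 0\<close> by (auto intro!: mult_left_mono simp: dist_norm norm_minus_commute)
      finally show ?thesis .
    qed
  qed simp
  then show ?thesis
    by (simp add: power2_eq_square mult_ac)
qed

lemma maximizer_displacement_le:
  fixes F :: "'a::real_normed_vector \<Rightarrow> 'b::real_normed_vector \<Rightarrow> real"
  assumes ysY: "\<And>x. ys x \<in> Y"
    and grow: "\<And>x y. y \<in> Y \<Longrightarrow> F x y + m * (norm (y - ys x))\<^sup>2 \<le> F x (ys x)"
    and lip: "\<And>x x' y. y \<in> Y \<Longrightarrow> \<bar>F x y - F x' y\<bar> \<le> b * norm (x - x')"
  shows "m * (norm (ys x' - ys x))\<^sup>2 \<le> b * norm (x' - x)"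
proof -
  have "F x' (ys x) + m * (norm (ys x' - ys x))\<^sup>2 \<le> F x' (ys x')"
    using grow[OF ysY, of x' x] by (simp add: norm_minus_commute)
  moreover have "F x (ys x') + m * (norm (ys x' - ys x))\<^sup>2 \<le> F x (ys x)"
    using grow[OF ysY] .
  moreover have "\<bar>F x' (ys x) - F x (ys x)\<bar> \<le> b * norm (x' - x)"
    by (rule lip[OF ysY])
  moreover have "\<bar>F x' (ys x') - F x (ys x')\<bar> \<le> b * norm (x' - x)"
    by (rule lip[OF ysY])
  ultimately show ?thesis
    by (simp add: abs_le_iff)
qed

text \<open>By optimality of both maximisers, the increment of x |-> F x (ys x) lies between the increments
  of F(., ys x0) and F(., ys (x0 + h)). The maximiser moves only by O(sqrt |h|), so replacing
  DF x0 (ys (x0 + h)) by DF x0 (ys x0) costs O(|h|^(3/2)) = o(|h|).\<close>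

theorem danskin_has_derivative:
  fixes F :: "'a::real_normed_vector \<Rightarrow> 'b::real_normed_vector \<Rightarrow> real"
    and DF :: "'a \<Rightarrow> 'b \<Rightarrow> 'a \<Rightarrow>\<^sub>L real"
  assumes der: "\<And>x y. y \<in> Y \<Longrightarrow> ((\<lambda>u. F u y) has_derivative DF x y) (at x)"
    and DF_lip_x: "\<And>x x' y. y \<in> Y \<Longrightarrow> norm (DF x y - DF x' y) \<le> c * norm (x - x')"
    and DF_lip_y: "\<And>x y y'. y \<in> Y \<Longrightarrow> y' \<in> Y \<Longrightarrow> norm (DF x y - DF x y') \<le> a * norm (y - y')"
    and F_lip_x: "\<And>x x' y. y \<in> Y \<Longrightarrow> \<bar>F x y - F x' y\<bar> \<le> b * norm (x - x')"
    and ysY: "\<And>x. ys x \<in> Y"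
    and grow: "\<And>x y. y \<in> Y \<Longrightarrow> F x y + m * (norm (y - ys x))\<^sup>2 \<le> F x (ys x)"
    and "m > 0" "c \<ge> 0" "a \<ge> 0"
  shows "((\<lambda>x. F x (ys x)) has_derivative DF x0 (ys x0)) (at x0)"
proof (rule has_derivative_at_remainderI)
  let ?r = "\<lambda>h::'a. c * norm h + a * sqrt (b / m * norm h)"
  show "(?r \<longlongrightarrow> 0) (at 0)"
  proof -
    have "(?r \<longlongrightarrow> c * norm (0::'a) + a * sqrt (b / m * norm (0::'a))) (at (0::'a))"
      by (intro tendsto_intros)
    then show ?thesis
      by simp
  qed
  fix h :: 'a
  let ?y0 = "ys x0" and ?y1 = "ys (x0 + h)"
  have taylor: "\<bar>F (x0 + h) y - F x0 y - DF x0 y h\<bar> \<le> c * (norm h)\<^sup>2" if "y \<in> Y" for y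
    using linearization_error_le[of "\<lambda>u. F u y" "\<lambda>x. DF x y"] der DF_lip_x that \<open>c \<ge> 0\<close> by simp
  have "(norm (?y1 - ?y0))\<^sup>2 \<le> b / m * norm h"
    using maximizer_displacement_le[of ys Y F m b "x0 + h" x0, OF ysY grow F_lip_x] \<open>m > 0\<close>
    by (simp add: field_simps)
  then have y_bound: "norm (?y1 - ?y0) \<le> sqrt (b / m * norm h)"
    by (rule real_le_rsqrt)
  have DF_y_bound: "\<bar>DF x0 ?y1 h - DF x0 ?y0 h\<bar> \<le> a * sqrt (b / m * norm h) * norm h"
  proof -
    have "\<bar>DF x0 ?y1 h - DF x0 ?y0 h\<bar> = norm (blinfun_apply (DF x0 ?y1 - DF x0 ?y0) h)"
      by (simp add: blinfun.diff_left)
    also have "\<dots> \<le> norm (DF x0 ?y1 - DF x0 ?y0) * norm h"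
      by (rule norm_blinfun)
    also have "\<dots> \<le> a * norm (?y1 - ?y0) * norm h"
      by (rule mult_right_mono[OF DF_lip_y[OF ysY ysY]]) simp
    also have "\<dots> \<le> a * sqrt (b / m * norm h) * norm h"
      using y_bound \<open>a \<ge> 0\<close>
      by (intro mult_right_mono mult_left_mono) auto
    finally show ?thesis .
  qed
  have nonneg: "0 \<le> m * (norm z)\<^sup>2" for z :: 'b
    using \<open>m > 0\<close> by simp
  have "F (x0 + h) ?y0 \<le> F (x0 + h) ?y1"
    using grow[OF ysY, of "x0 + h" x0] nonneg[of "?y0 - ?y1"] by linarith
  moreover have "F x0 ?y1 \<le> F x0 ?y0"
    using grow[OF ysY, of x0 "x0 + h"] nonneg[of "?y1 - ?y0"] by linarith
  ultimately have "\<bar>F (x0 + h) ?y1 - F x0 ?y0 - DF x0 ?y0 h\<bar> \<le> c * (norm h)\<^sup>2 + a * sqrt (b / m * norm h) * norm h"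
    using taylor[OF ysY, of x0] taylor[OF ysY, of "x0 + h"] DF_y_bound by (simp add: abs_le_iff)
  then show "norm (F (x0 + h) ?y1 - F x0 ?y0 - DF x0 ?y0 h) \<le> ?r h * norm h"
    by (simp add: power2_eq_square algebra_simps)
qed (rule blinfun.bounded_linear_right)

section \<open>Gradients of functions with a bounded linear derivative\<close>

definition riesz_vector :: "('a::euclidean_space \<Rightarrow>\<^sub>L real) \<Rightarrow> 'a" where
  "riesz_vector D = (\<Sum>b\<in>Basis. D b *\<^sub>R b)"

lemma inner_riesz_vector: "riesz_vector D \<bullet> h = blinfun_apply D h"
proof -
  have "blinfun_apply D h = blinfun_apply D (\<Sum>b\<in>Basis. (h \<bullet> b) *\<^sub>R b)"
    by (simp add: euclidean_representation)
  also have "\<dots> = (\<Sum>b\<in>Basis. (h \<bullet> b) * D b)"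
    by (simp add: blinfun.sum_right blinfun.scaleR_right)
  also have "\<dots> = riesz_vector D \<bullet> h"
    unfolding riesz_vector_def inner_sum_left by (simp add: inner_commute mult.commute)
  finally show ?thesis
    by simp
qed

lemma grad_eq_riesz_vector:
  assumes "(f has_derivative blinfun_apply D) (at x)"
  shows "grad f x = riesz_vector D"
  unfolding grad_def
proof (rule the_equality)
  show "(f has_derivative (\<lambda>h. riesz_vector D \<bullet> h)) (at x)"
    using assms by (simp add: inner_riesz_vector)
next
  fix g assume "(f has_derivative (\<lambda>h. g \<bullet> h)) (at x)"
  then have "(\<lambda>h. g \<bullet> h) = blinfun_apply D"
    using assms by (rule has_derivative_unique)
  then have "g \<bullet> (g - riesz_vector D) = riesz_vector D \<bullet> (g - riesz_vector D)"
    by (metis inner_riesz_vector)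
  then have "(g - riesz_vector D) \<bullet> (g - riesz_vector D) = 0"
    by (simp add: inner_diff_left)
  then show "g = riesz_vector D"
    by simp
qed

lemma norm_riesz_vector_le: "norm (riesz_vector D) \<le> norm D"
proof -
  have "(norm (riesz_vector D))\<^sup>2 = blinfun_apply D (riesz_vector D)"
    by (simp add: power2_norm_eq_inner inner_riesz_vector)
  also have "\<dots> \<le> norm D * norm (riesz_vector D)"
    using norm_blinfun[of D "riesz_vector D"] by simp
  finally show ?thesis
    by (cases "riesz_vector D = 0") (auto simp: power2_eq_square mult_le_cancel_right)
qed

lemma norm_grad_le_norm_grad_plus:
  fixes f g :: "'a::euclidean_space \<Rightarrow> real"
  assumes "(f has_derivative blinfun_apply D) (at x)" and "(g has_derivative blinfun_apply D') (at x)"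
  shows "norm (grad f x) \<le> norm (grad g x) + norm (D - D')"
proof -
  have "riesz_vector D - riesz_vector D' = riesz_vector (D - D')"
    by (simp add: riesz_vector_def blinfun.diff_left scaleR_diff_left sum_subtractf)
  then have "norm (riesz_vector D) \<le> norm (riesz_vector D') + norm (D - D')"
    using norm_triangle_ineq2[of "riesz_vector D" "riesz_vector D'"] norm_riesz_vector_le[of "D - D'"]
    by simp
  then show ?thesis
    using grad_eq_riesz_vector assms by metis
qed

section \<open>The sample-average surrogate\<close>

definition model_lift_deriv :: "real^'d^'n \<Rightarrow> (real^'n) \<Rightarrow>\<^sub>L ((real^'n) \<times> (real^'m) \<times> (real^'d))" where
  "model_lift_deriv B1 = Blinfun (\<lambda>h. (h, 0, h v* B1))"

lemma model_lift_deriv_apply: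
  "blinfun_apply (model_lift_deriv B1 :: (real^'n) \<Rightarrow>\<^sub>L ((real^'n) \<times> (real^'m) \<times> (real^'d))) h = (h, 0, h v* B1)"
proof -
  have "bounded_linear (\<lambda>h::real^'n. (h, 0::real^'m, h v* (B1::real^'d^'n)))"
    using bounded_linear_vector_matrix_mult
    by (intro bounded_linear_Pair bounded_linear_ident bounded_linear_zero)
  then show ?thesis
    unfolding model_lift_deriv_def by (simp add: bounded_linear_Blinfun_apply)
qed

lemma has_derivative_model_lift:
  "((\<lambda>u. (u, y, model B1 B0 u e)) has_derivative blinfun_apply (model_lift_deriv B1)) (at x)"
proof -
  have "((\<lambda>u. (u, y, u v* B1 + B0 + e)) has_derivative (\<lambda>h. (h, 0, h v* B1 + 0 + 0))) (at x)"
    by (intro has_derivative_Pair has_derivative_ident has_derivative_const has_derivative_add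
        bounded_linear.has_derivative[OF bounded_linear_vector_matrix_mult])
  then show ?thesis
    by (simp add: model_def model_lift_deriv_apply[abs_def])
qed

lemma norm_model_lift_deriv_le:
  "norm (model_lift_deriv B1 :: (real^'n) \<Rightarrow>\<^sub>L ((real^'n) \<times> (real^'m) \<times> (real^'d))) \<le> 1 + norm B1"
proof (rule norm_blinfun_bound)
  fix h :: "real^'n"
  have "norm (h, 0::real^'m, h v* B1) \<le> norm h + norm (0::real^'m) + norm h * norm B1"
    using norm_triple_le[of h "0::real^'m" "h v* B1"] norm_vector_matrix_mult_le[of h B1] by simp
  then show "norm (blinfun_apply (model_lift_deriv B1 :: (real^'n) \<Rightarrow>\<^sub>L ((real^'n) \<times> (real^'m) \<times> (real^'d))) h)
      \<le> (1 + norm B1) * norm h"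
    by (simp add: model_lift_deriv_apply algebra_simps)
qed simp

lemma norm_model_lift_diff_le:
  fixes x x' :: "real^'n" and y y' :: "'m::real_normed_vector"
  shows "norm ((x, y, model B1 B0 x e) - (x', y', model B1 B0 x' e)) \<le> (1 + norm B1) * norm (x - x') + norm (y - y')"
proof -
  have "norm ((x, y, model B1 B0 x e) - (x', y', model B1 B0 x' e)) = norm (x - x', y - y', (x - x') v* B1)"
    by (simp add: model_def vector_matrix_mult_diff_distrib)
  also have "\<dots> \<le> norm (x - x') + norm (y - y') + norm (x - x') * norm B1"
    using norm_triple_le[of "x - x'" "y - y'" "(x - x') v* B1"] norm_vector_matrix_mult_le[of "x - x'" B1]
    by simp
  finally show ?thesis
    by (simp add: algebra_simps)
qed

definition Lk_xderiv ::
    "((real^'n) \<times> (real^'m) \<times> (real^'d) \<Rightarrow> ((real^'n) \<times> (real^'m) \<times> (real^'d)) \<Rightarrow>\<^sub>L real) \<Rightarrow> nat \<Rightarrow>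
      real^'d^'n \<Rightarrow> real^'d \<Rightarrow> (nat \<Rightarrow> real^'d) \<Rightarrow> real^'n \<Rightarrow> real^'m \<Rightarrow> (real^'n) \<Rightarrow>\<^sub>L real" where
  "Lk_xderiv D N B1 B0 es x y = (1 / real N) *\<^sub>R (\<Sum>i<N. D (x, y, model B1 B0 x (es i)) o\<^sub>L model_lift_deriv B1)"

lemma has_derivative_Lk:
  assumes "\<And>p. ((\<lambda>(x, y, z). l x y z) has_derivative blinfun_apply (D p)) (at p)"
  shows "((\<lambda>u. Lk l N B1 B0 es u y) has_derivative blinfun_apply (Lk_xderiv D N B1 B0 es x y)) (at x)"
proof -
  have "((\<lambda>u. l u y (model B1 B0 u e)) has_derivative (\<lambda>h. D (x, y, model B1 B0 x e) (model_lift_deriv B1 h))) (at x)"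
    for e
    using diff_chain_at[OF has_derivative_model_lift assms] by (simp add: o_def)
  then have "((\<lambda>u. (1 / real N) * (\<Sum>i<N. l u y (model B1 B0 u (es i)))) has_derivative
      (\<lambda>h. (1 / real N) * (\<Sum>i<N. D (x, y, model B1 B0 x (es i)) (model_lift_deriv B1 h)))) (at x)"
    by (intro has_derivative_mult_right has_derivative_sum)
  moreover have "blinfun_apply (Lk_xderiv D N B1 B0 es x y)
      = (\<lambda>h. (1 / real N) * (\<Sum>i<N. D (x, y, model B1 B0 x (es i)) (model_lift_deriv B1 h)))"
    by (rule ext) (simp add: Lk_xderiv_def blinfun.bilinear_simps)
  ultimately show ?thesis
    by (simp add: Lk_def)
qed

lemma Lk_diff_le:
  fixes l :: "real^'n \<Rightarrow> real^'m \<Rightarrow> real^'d \<Rightarrow> real"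
  assumes lip: "C-lipschitz_on UNIV (\<lambda>(x, y, z). l x y z)" and "N > 0"
  shows "\<bar>Lk l N B1 B0 es x y - Lk l N B1 B0 es x' y'\<bar> \<le> C * ((1 + norm B1) * norm (x - x') + norm (y - y'))"
proof -
  have "\<bar>l x y (model B1 B0 x e) - l x' y' (model B1 B0 x' e)\<bar>
      \<le> C * ((1 + norm B1) * norm (x - x') + norm (y - y'))" for e
  proof -
    have "\<bar>l x y (model B1 B0 x e) - l x' y' (model B1 B0 x' e)\<bar>
        \<le> C * norm ((x, y, model B1 B0 x e) - (x', y', model B1 B0 x' e))"
      using lipschitz_onD[OF lip, of "(x, y, model B1 B0 x e)" "(x', y', model B1 B0 x' e)"]
      by (simp add: dist_norm dist_real_def)
    also have "\<dots> \<le> C * ((1 + norm B1) * norm (x - x') + norm (y - y'))"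
      using norm_model_lift_diff_le lipschitz_on_nonneg[OF lip] by (rule mult_left_mono)
    finally show ?thesis .
  qed
  then show ?thesis
    using norm_mean_diff_le[OF \<open>N > 0\<close>, of "\<lambda>i. l x y (model B1 B0 x (es i))" "\<lambda>i. l x' y' (model B1 B0 x' (es i))"]
    by (simp add: Lk_def)
qed

lemma norm_Lk_xderiv_diff_le:
  fixes D :: "(real^'n) \<times> (real^'m) \<times> (real^'d) \<Rightarrow> ((real^'n) \<times> (real^'m) \<times> (real^'d)) \<Rightarrow>\<^sub>L real"
  assumes lip: "C-lipschitz_on UNIV D" and "N > 0"
  shows "norm (Lk_xderiv D N B1 B0 es x y - Lk_xderiv D N B1 B0 es x' y')
    \<le> C * (1 + norm B1) * ((1 + norm B1) * norm (x - x') + norm (y - y'))"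
proof -
  have "norm ((D (x, y, model B1 B0 x e) o\<^sub>L model_lift_deriv B1) - (D (x', y', model B1 B0 x' e) o\<^sub>L model_lift_deriv B1))
      \<le> C * (1 + norm B1) * ((1 + norm B1) * norm (x - x') + norm (y - y'))" for e
  proof -
    have "norm ((D (x, y, model B1 B0 x e) o\<^sub>L model_lift_deriv B1) - (D (x', y', model B1 B0 x' e) o\<^sub>L model_lift_deriv B1))
        \<le> norm (D (x, y, model B1 B0 x e) - D (x', y', model B1 B0 x' e))
          * norm (model_lift_deriv B1 :: (real^'n) \<Rightarrow>\<^sub>L ((real^'n) \<times> (real^'m) \<times> (real^'d)))"
      using norm_blinfun_compose[of "D (x, y, model B1 B0 x e) - D (x', y', model B1 B0 x' e)" "model_lift_deriv B1"]
      by (simp add: bounded_bilinear.diff_left[OF bounded_bilinear_blinfun_compose])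
    also have "\<dots> \<le> (C * ((1 + norm B1) * norm (x - x') + norm (y - y'))) * (1 + norm B1)"
    proof (rule mult_mono)
      have "norm (D (x, y, model B1 B0 x e) - D (x', y', model B1 B0 x' e))
          \<le> C * norm ((x, y, model B1 B0 x e) - (x', y', model B1 B0 x' e))"
        using lipschitz_onD[OF lip, of "(x, y, model B1 B0 x e)" "(x', y', model B1 B0 x' e)"]
        by (simp add: dist_norm)
      also have "\<dots> \<le> C * ((1 + norm B1) * norm (x - x') + norm (y - y'))"
        using norm_model_lift_diff_le lipschitz_on_nonneg[OF lip] by (rule mult_left_mono)
      finally show "norm (D (x, y, model B1 B0 x e) - D (x', y', model B1 B0 x' e))
          \<le> C * ((1 + norm B1) * norm (x - x') + norm (y - y'))" .
    qed (use norm_model_lift_deriv_le lipschitz_on_nonneg[OF lip] in auto)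
    finally show ?thesis
      by (simp add: mult_ac)
  qed
  then show ?thesis
    unfolding Lk_xderiv_def by (rule norm_mean_diff_le[OF \<open>N > 0\<close>])
qed

locale minimax_surrogate =
  fixes l :: "real^'n \<Rightarrow> real^'m \<Rightarrow> real^'d \<Rightarrow> real"
    and D :: "(real^'n) \<times> (real^'m) \<times> (real^'d) \<Rightarrow> ((real^'n) \<times> (real^'m) \<times> (real^'d)) \<Rightarrow>\<^sub>L real"
    and ell1 L\<^sub>1 \<mu> :: real and Y :: "(real^'m) set"
    and N :: nat and B1 :: "real^'d^'n" and B0 :: "real^'d" and es :: "nat \<Rightarrow> real^'d"
  assumes l_deriv: "\<And>p. ((\<lambda>(x, y, z). l x y z) has_derivative blinfun_apply (D p)) (at p)"
    and D_lip: "ell1-lipschitz_on UNIV D"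
    and l_lip: "L\<^sub>1-lipschitz_on UNIV (\<lambda>(x, y, z). l x y z)"
    and l_sc: "\<And>x z. strongly_concave_on \<mu> Y (\<lambda>y. l x y z)"
    and \<mu>_pos: "\<mu> > 0"
    and Y_compact: "compact Y" and Y_convex: "convex Y" and Y_ne: "Y \<noteq> {}"
    and N_pos: "N > 0"
begin

abbreviation L :: "real^'n \<Rightarrow> real^'m \<Rightarrow> real" where
  "L \<equiv> Lk l N B1 B0 es"

abbreviation ystar :: "real^'n \<Rightarrow> real^'m" where
  "ystar x \<equiv> argmax_on (L x) Y"

lemma L_diff_y_le: "\<bar>L x y - L x y'\<bar> \<le> L\<^sub>1 * norm (y - y')"
  using Lk_diff_le[OF l_lip N_pos, of B1 B0 es x y x y'] by simp

lemma L_diff_x_le: "\<bar>L x y - L x' y\<bar> \<le> L\<^sub>1 * (1 + norm B1) * norm (x - x')"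
  using Lk_diff_le[OF l_lip N_pos, of B1 B0 es x y x' y] by (simp add: mult_ac)

lemma strongly_concave_L: "strongly_concave_on \<mu> Y (L x)"
proof -
  have "strongly_concave_on \<mu> Y (\<lambda>y. (1 / real N) * (\<Sum>i<N. l x y (model B1 B0 x (es i))))"
    using l_sc N_pos by (rule strongly_concave_on_mean)
  then show ?thesis
    by (simp add: Lk_def[abs_def])
qed

lemma continuous_on_L: "continuous_on Y (L x)"
  by (rule lipschitz_on_continuous_on[of L\<^sub>1], rule lipschitz_onI)
    (use L_diff_y_le lipschitz_on_nonneg[OF l_lip] in \<open>auto simp: dist_norm dist_real_def\<close>)

lemma ystar_in: "ystar x \<in> Y"
  and ystar_growth: "y \<in> Y \<Longrightarrow> L x y + \<mu> / 4 * (norm (y - ystar x))\<^sup>2 \<le> L x (ystar x)"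
  using argmax_on_strongly_concave[OF strongly_concave_L \<mu>_pos Y_convex Y_compact Y_ne continuous_on_L]
  by blast+

lemma L_le_L_ystar: "y \<in> Y \<Longrightarrow> L x y \<le> L x (ystar x)"
proof -
  assume "y \<in> Y"
  moreover have "0 \<le> \<mu> / 4 * (norm (y - ystar x))\<^sup>2"
    using \<mu>_pos by simp
  ultimately show ?thesis
    using ystar_growth[of y x] by linarith
qed

lemma Phi_of_L: "Phi_of L Y x = L x (ystar x)"
  using ystar_in L_le_L_ystar by (rule Phi_of_eqI)

lemma Phi_of_L_diff_le:
  assumes "y \<in> Y"
  shows "Phi_of L Y x' - Phi_of L Y x \<le> L x' y' - L x y + L\<^sub>1 * norm (y' - ystar x')"
proof -
  have "L x' (ystar x') \<le> L x' y' + L\<^sub>1 * norm (y' - ystar x')"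
    using L_diff_y_le[of x' "ystar x'" y'] by (simp add: norm_minus_commute abs_le_iff)
  then show ?thesis
    using L_le_L_ystar[OF assms, of x] unfolding Phi_of_L by linarith
qed

lemma has_derivative_Phi_of_L:
  "(Phi_of L Y has_derivative blinfun_apply (Lk_xderiv D N B1 B0 es x0 (ystar x0))) (at x0)"
proof -
  let ?DL = "Lk_xderiv D N B1 B0 es"
  have "((\<lambda>x. L x (ystar x)) has_derivative blinfun_apply (?DL x0 (ystar x0))) (at x0)"
  proof (rule danskin_has_derivative[where Y = Y and m = "\<mu> / 4"
        and c = "ell1 * (1 + norm B1) * (1 + norm B1)" and a = "ell1 * (1 + norm B1)"
        and b = "L\<^sub>1 * (1 + norm B1)"])
    show "((\<lambda>u. L u y) has_derivative blinfun_apply (?DL x y)) (at x)" for x y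
      using l_deriv by (rule has_derivative_Lk)
    show "norm (?DL x y - ?DL x' y) \<le> ell1 * (1 + norm B1) * (1 + norm B1) * norm (x - x')" for x x' y
      using norm_Lk_xderiv_diff_le[OF D_lip N_pos, of B1 B0 es x y x' y] by (simp add: mult_ac)
    show "norm (?DL x y - ?DL x y') \<le> ell1 * (1 + norm B1) * norm (y - y')" for x y y'
      using norm_Lk_xderiv_diff_le[OF D_lip N_pos, of B1 B0 es x y x y'] by simp
  qed (use L_diff_x_le ystar_in ystar_growth \<mu>_pos lipschitz_on_nonneg[OF D_lip] in auto)
  then show ?thesis
    by (simp add: Phi_of_L[abs_def])
qed

lemma norm_grad_Phi_of_L_le:
  "norm (grad (Phi_of L Y) x) \<le> norm (grad (\<lambda>u. L u y) x) + ell1 * (1 + norm B1) * norm (y - ystar x)"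
  using norm_grad_le_norm_grad_plus[OF has_derivative_Phi_of_L has_derivative_Lk[OF l_deriv, of N B1 B0 es y x]]
    norm_Lk_xderiv_diff_le[OF D_lip N_pos, of B1 B0 es x "ystar x" x y]
  by (simp add: norm_minus_commute)

end

section \<open>The decrease estimate\<close>

lemma one_plus_le_square:
  fixes t B :: real
  assumes "0 \<le> t" and "t \<le> B"
  shows "1 + t \<le> (1 + B)\<^sup>2"
proof -
  have "(1 + B)\<^sup>2 = 1 + B + B * (1 + B)"
    by (simp add: power2_eq_square algebra_simps)
  moreover have "0 \<le> B * (1 + B)"
    using assms by simp
  ultimately show ?thesis
    using assms by linarith
qed

lemma mult_le_of_le_divide:
  fixes a c e x :: real
  assumes "0 < c" and "a \<le> c" and "0 \<le> x" and "x \<le> e / c"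
  shows "a * x \<le> e"
proof -
  have "a * x \<le> c * x"
    using assms(2,3) by (rule mult_right_mono)
  also have "\<dots> \<le> e"
    using assms(1,4) by (simp add: pos_le_divide_eq mult.commute)
  finally show ?thesis .
qed

lemma trust_region_decrease_bound:
  fixes \<Delta> g G \<delta> \<delta>max \<kappa>dcp \<kappa>ef \<kappa>ed :: real
  assumes decrease: "\<Delta> \<le> 3 * \<kappa>ef * \<delta>\<^sup>2 - \<kappa>dcp * g * min \<delta> 1"
    and g: "G - 2 * \<kappa>ed * \<delta> \<le> g"
    and "0 < \<delta>" "\<delta> \<le> \<delta>max" "0 < \<kappa>dcp" "0 < \<kappa>ef" "0 < \<kappa>ed"
    and \<delta>_small: "\<delta> \<le> G / ((8 * \<kappa>ef / \<kappa>dcp + 2 * \<kappa>ed) * max 1 \<delta>max)"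
  shows "\<Delta> \<le> - (4 * \<kappa>dcp * \<kappa>ef / ((8 * \<kappa>ef + 2 * \<kappa>ed * \<kappa>dcp) * max \<delta>max 1)) * G * \<delta>"
proof -
  define M where "M = max 1 \<delta>max"
  define K where "K = 8 * \<kappa>ef + 2 * \<kappa>ed * \<kappa>dcp"
  \<comment> \<open>u \<ge> \<delta>, and every term of the estimate becomes a multiple of u \<delta>\<close>
  define u where "u = \<kappa>dcp * G / (K * M)"
  have "1 \<le> M" "\<delta> \<le> M" "0 < M"
    using \<open>\<delta> \<le> \<delta>max\<close> by (auto simp: M_def)
  have "0 < K"
    using assms(5-7) by (simp add: K_def add_pos_pos)
  have G: "G = K * M * u / \<kappa>dcp"
    using \<open>0 < M\<close> \<open>0 < K\<close> \<open>0 < \<kappa>dcp\<close> by (simp add: u_def)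
  have C1: "4 * \<kappa>dcp * \<kappa>ef / ((8 * \<kappa>ef + 2 * \<kappa>ed * \<kappa>dcp) * max \<delta>max 1) * G = 4 * \<kappa>ef * u"
    by (simp add: u_def flip: K_def M_def max.commute)
  have "\<delta> \<le> u"
  proof -
    have "8 * \<kappa>ef / \<kappa>dcp + 2 * \<kappa>ed = K / \<kappa>dcp"
      using \<open>0 < \<kappa>dcp\<close> by (simp add: K_def add_divide_distrib)
    then show ?thesis
      using \<delta>_small by (simp add: u_def M_def mult.commute)
  qed
  have "\<delta> / M \<le> min \<delta> 1" "\<delta> / M \<le> \<delta>"
    using \<open>1 \<le> M\<close> \<open>\<delta> \<le> M\<close> \<open>0 < \<delta>\<close> by (simp_all add: divide_le_eq_1 divide_le_eq mult_le_cancel_left1)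
  have "2 * \<kappa>ed * \<delta> \<le> G"
  proof -
    have "2 * \<kappa>ed * \<kappa>dcp * \<delta> \<le> K * \<delta>"
      using assms by (simp add: K_def)
    also have "\<dots> \<le> K * M * u"
      using \<open>\<delta> \<le> u\<close> \<open>1 \<le> M\<close> \<open>0 < \<delta>\<close> \<open>0 < K\<close> by (simp add: mult_mono)
    finally show ?thesis
      using \<open>0 < \<kappa>dcp\<close> by (simp add: G pos_le_divide_eq mult_ac)
  qed
  then have "\<kappa>dcp * (G - 2 * \<kappa>ed * \<delta>) * (\<delta> / M) \<le> \<kappa>dcp * g * min \<delta> 1"
    using g \<open>\<delta> / M \<le> min \<delta> 1\<close> \<open>0 < M\<close> \<open>0 < \<delta>\<close> \<open>0 < \<kappa>dcp\<close>
    by (intro mult_mono mult_left_mono) auto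
  then have "\<Delta> \<le> 3 * \<kappa>ef * \<delta>\<^sup>2 - \<kappa>dcp * (G - 2 * \<kappa>ed * \<delta>) * (\<delta> / M)"
    using decrease by linarith
  also have "\<dots> = 3 * (\<kappa>ef * \<delta>\<^sup>2) - 8 * (\<kappa>ef * (u * \<delta>))
      - 2 * (\<kappa>dcp * \<kappa>ed * (u * \<delta>)) + 2 * (\<kappa>dcp * \<kappa>ed * (\<delta> * (\<delta> / M)))"
    using \<open>0 < M\<close> \<open>0 < \<kappa>dcp\<close> by (simp add: G K_def field_simps)
  also have "\<dots> \<le> - 4 * (\<kappa>ef * (u * \<delta>))"
  proof -
    have "\<kappa>ef * \<delta>\<^sup>2 \<le> \<kappa>ef * (u * \<delta>)"
      using \<open>\<delta> \<le> u\<close> \<open>0 < \<delta>\<close> \<open>0 < \<kappa>ef\<close> by (simp add: power2_eq_square)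
    moreover have "\<kappa>dcp * \<kappa>ed * (\<delta> * (\<delta> / M)) \<le> \<kappa>dcp * \<kappa>ed * (u * \<delta>)"
    proof (rule mult_left_mono)
      show "\<delta> * (\<delta> / M) \<le> u * \<delta>"
        using \<open>\<delta> \<le> u\<close> \<open>\<delta> / M \<le> \<delta>\<close> \<open>0 < \<delta>\<close>
        by (metis mult.commute mult_left_mono order.trans less_imp_le)
    qed (use assms(5-7) in simp)
    moreover have "0 \<le> \<kappa>ef * (u * \<delta>)"
      using \<open>\<delta> \<le> u\<close> \<open>0 < \<delta>\<close> \<open>0 < \<kappa>ef\<close> by simp
    ultimately show ?thesis
      by linarith
  qed
  also have "\<dots> = - (4 * \<kappa>dcp * \<kappa>ef / ((8 * \<kappa>ef + 2 * \<kappa>ed * \<kappa>dcp) * max \<delta>max 1)) * G * \<delta>"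
    using C1 by simp
  finally show ?thesis .
qed
theorem lemma4:
  fixes l :: "real^'n \<Rightarrow> real^'m \<Rightarrow> real^'d \<Rightarrow> real"
    and \<psi> :: "real^'n \<Rightarrow> real^'d"
    and Y :: "(real^'m) set"
    and E :: "(real^'d) measure"
    and ell1 L\<^sub>1 ell0 L\<^sub>0 \<mu> :: real
    and N :: nat and xs :: "nat \<Rightarrow> real^'n" and eps :: "nat \<Rightarrow> real^'d"
    and B1 :: "real^'d^'n" and B0 :: "real^'d" and B :: real
    and xk :: "real^'n" and \<delta> \<delta>max \<kappa>dcp \<kappa>ef \<kappa>ed :: real
    and yi :: "real^'n \<Rightarrow> real^'m" and s :: "real^'n"
  defines "\<Phi> \<equiv> Phi_of (Lexp l \<psi> E) Y"
    and "L\<^sub>k \<equiv> Lk l N B1 B0 (\<lambda>i. \<psi> (xs i) + eps i - xs i v* B1 - B0)"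
    and "\<Phi>\<^sub>k \<equiv> Phi_of (Lk l N B1 B0 (\<lambda>i. \<psi> (xs i) + eps i - xs i v* B1 - B0)) Y"
    and "ystar \<equiv> (\<lambda>x. argmax_on (Lk l N B1 B0 (\<lambda>i. \<psi> (xs i) + eps i - xs i v* B1 - B0) x) Y)"
    and "ellhat \<equiv> ell1 * (1 + B)\<^sup>2"
  assumes l_smooth: "smooth_fun ell1 (\<lambda>(x, y, z). l x y z)"
    and l_lip: "L\<^sub>1-lipschitz_on UNIV (\<lambda>(x, y, z). l x y z)"
    and ell1_pos: "ell1 > 0" and L\<^sub>1_pos: "L\<^sub>1 > 0"
    and psi_twice: "twice_diff \<psi>"
    and psi_smooth: "smooth_fun ell0 \<psi>"
    and psi_lip: "L\<^sub>0-lipschitz_on UNIV \<psi>"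
    and Y_ne: "Y \<noteq> {}" and Y_closed: "closed Y" and Y_convex: "convex Y" and Y_bounded: "bounded Y"
    and \<mu>_pos: "\<mu> > 0"
    and l_sc: "\<And>x z. strongly_concave_on \<mu> Y (\<lambda>y. l x y z)"
    and E_prob: "prob_space E" and E_sets: "sets E = sets borel"
    and E_supp: "\<exists>K. compact K \<and> (AE e in E. e \<in> K)"
    and E_mean: "integrable E (\<lambda>e. e)" "(\<integral>e. e \<partial>E) = 0"
    and \<Phi>_diff: "\<And>x. \<Phi> differentiable (at x)"
    and N_pos: "N > 0"
    and xs_ball: "\<And>i. i < N \<Longrightarrow> xs i \<in> cball xk \<delta>"
    and LS: "\<And>C1 C0. ls_obj N xs (\<lambda>i. \<psi> (xs i) + eps i) B1 B0 \<le> ls_obj N xs (\<lambda>i. \<psi> (xs i) + eps i) C1 C0"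
    and B1_bound: "norm B1 \<le> B"
    and \<delta>_pos: "0 < \<delta>" and \<delta>_max: "\<delta> \<le> \<delta>max"
    and \<kappa>_pos: "\<kappa>dcp > 0" "\<kappa>ef > 0" "\<kappa>ed > 0"
    and yi_Y: "\<And>x. x \<in> cball xk \<delta> \<Longrightarrow> yi x \<in> Y"
    and yi_close: "\<And>x. x \<in> cball xk \<delta> \<Longrightarrow>
        norm (yi x - ystar x) \<le> min (\<kappa>ed * \<delta> / ellhat) (\<kappa>ef * \<delta>\<^sup>2 / L\<^sub>1)"
    and s_norm: "norm s \<le> \<delta>"
    and decrease: "L\<^sub>k xk (yi xk) - L\<^sub>k (xk + s) (yi (xk + s)) \<ge> \<kappa>dcp * norm (grad (\<lambda>x. L\<^sub>k x (yi xk)) xk) * min \<delta> 1"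
    and acc_f: "\<And>x. x \<in> cball xk \<delta> \<Longrightarrow> \<bar>\<Phi> x - \<Phi>\<^sub>k x\<bar> \<le> \<kappa>ef * \<delta>\<^sup>2"
    and acc_g: "norm (grad \<Phi> xk) - norm (grad \<Phi>\<^sub>k xk) \<le> \<kappa>ed * \<delta>"
    and \<delta>_small: "\<delta> \<le> norm (grad \<Phi> xk) / ((8 * \<kappa>ef / \<kappa>dcp + 2 * \<kappa>ed) * max 1 \<delta>max)"
  shows "\<Phi> (xk + s) - \<Phi> xk \<le>
    - (4 * \<kappa>dcp * \<kappa>ef / ((8 * \<kappa>ef + 2 * \<kappa>ed * \<kappa>dcp) * max \<delta>max 1)) * norm (grad \<Phi> xk) * \<delta>"
proof -
  obtain D where D_deriv: "\<And>p. ((\<lambda>(x, y, z). l x y z) has_derivative blinfun_apply (D p)) (at p)"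
    and D_lip: "ell1-lipschitz_on UNIV D"
    using l_smooth unfolding smooth_fun_def by blast
  interpret minimax_surrogate l D ell1 L\<^sub>1 \<mu> Y N B1 B0 "\<lambda>i. \<psi> (xs i) + eps i - xs i v* B1 - B0"
    using D_deriv D_lip l_lip l_sc \<mu>_pos Y_closed Y_bounded Y_convex Y_ne N_pos
    by unfold_locales (auto simp: compact_eq_bounded_closed)
  note defs = \<Phi>\<^sub>k_def L\<^sub>k_def ystar_def
  have xk_in: "xk \<in> cball xk \<delta>" and xks_in: "xk + s \<in> cball xk \<delta>"
    using \<delta>_pos s_norm by (auto simp: dist_norm)
  have "1 + norm B1 \<le> (1 + B)\<^sup>2"
    using norm_ge_zero B1_bound by (rule one_plus_le_square)
  then have ellhat_ge: "ell1 * (1 + norm B1) \<le> ellhat"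
    using ell1_pos unfolding ellhat_def by simp
  have ellhat_pos: "0 < ellhat"
    using ell1_pos \<open>1 + norm B1 \<le> (1 + B)\<^sup>2\<close> norm_ge_zero[of B1] unfolding ellhat_def
    by (intro mult_pos_pos) linarith+
  have "ell1 * (1 + norm B1) * norm (yi xk - ystar xk) \<le> \<kappa>ed * \<delta>"
    by (rule mult_le_of_le_divide[OF ellhat_pos ellhat_ge norm_ge_zero]) (use yi_close[OF xk_in] in simp)
  then have grad_gap: "norm (grad \<Phi>\<^sub>k xk) \<le> norm (grad (\<lambda>x. L\<^sub>k x (yi xk)) xk) + \<kappa>ed * \<delta>"
    using norm_grad_Phi_of_L_le[of xk "yi xk"] unfolding defs by simp
  have "L\<^sub>1 * norm (yi (xk + s) - ystar (xk + s)) \<le> \<kappa>ef * \<delta>\<^sup>2"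
    by (rule mult_le_of_le_divide[OF L\<^sub>1_pos order_refl norm_ge_zero]) (use yi_close[OF xks_in] in simp)
  then have "\<Phi>\<^sub>k (xk + s) - \<Phi>\<^sub>k xk \<le> L\<^sub>k (xk + s) (yi (xk + s)) - L\<^sub>k xk (yi xk) + \<kappa>ef * \<delta>\<^sup>2"
    using Phi_of_L_diff_le[OF yi_Y[OF xk_in], of "xk + s" xk "yi (xk + s)"] unfolding defs by simp
  moreover have "\<Phi> (xk + s) - \<Phi>\<^sub>k (xk + s) \<le> \<kappa>ef * \<delta>\<^sup>2" and "\<Phi>\<^sub>k xk - \<Phi> xk \<le> \<kappa>ef * \<delta>\<^sup>2"
    using acc_f[OF xks_in] acc_f[OF xk_in] by (simp_all add: abs_le_iff)
  ultimately have "\<Phi> (xk + s) - \<Phi> xk \<le> 3 * \<kappa>ef * \<delta>\<^sup>2 - \<kappa>dcp * norm (grad (\<lambda>x. L\<^sub>k x (yi xk)) xk) * min \<delta> 1"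
    using decrease by linarith
  then show ?thesis
    by (rule trust_region_decrease_bound[OF _ _ \<delta>_pos \<delta>_max \<kappa>_pos \<delta>_small]) (use grad_gap acc_g in linarith)
qed

end
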